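(* Let $\mathcal E:\mathbb R^d\to\mathbb R$ be continuous and positive with $\underline{\mathcal E}:=\inf_{v\in\mathbb R^d}\mathcal E(v)$ and $\overline{\mathcal E}:=\sup_{v\in\mathbb R^d}\mathcal E(v)$ finite, so that $\underline{\mathcal E}\le \mathcal E(w)\le\overline{\mathcal E}$ for all $w\in\mathbb R^d$. Fix $\beta>0$, $\lambda\ge 0$, $\sigma\ge0$, and put $C_{\beta,\mathcal E}:=e^{\beta(\overline{\mathcal E}-\underline{\mathcal E})}$. Let $f(v,t)$ be a family of probability densities on $\mathbb R^d$ (with finite second moments) solving the Boltzmann-type equation with microscopic best estimate only, described in the context. Then, if $\beta$ is sufficiently large, for all $t>0$ $$V(t)\le V(0)\exp\Big(-\Big(\frac{\lambda}{C_{\beta,\mathcal E}}-\lambda^2-2\sigma^2\kappa\Big)t\Big).$$ In particular, if $\sigma^2<\frac{\lambda}{2\kappa}\big(\frac{1}{C_{\beta,\mathcal E}}-\lambda\big)$, then $V(t)\to0$ as $t\to\infty$.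
   Context: Let $\omega_\beta^{\mathcal E}(v):=e^{-\beta\mathcal E(v)}$ and $\gamma_\beta^{\mathcal E}(v,v_* ):=\frac{\omega_\beta^{\mathcal E}(v_* )}{\omega_\beta^{\mathcal E}(v)+\omega_\beta^{\mathcal E}(v_* )}$, and $v_{\beta,\mathcal E}(v,v_* ):=\frac{\omega_\beta^{\mathcal E}(v)v+\omega_\beta^{\mathcal E}(v_* )v_*}{\omega_\beta^{\mathcal E}(v)+\omega_\beta^{\mathcal E}(v_* )}$, so that $v_{\beta,\mathcal E}(v,v_* )-v=\gamma_\beta^{\mathcal E}(v,v_* )(v_*-v)$. The binary interaction is $v'=v+\lambda\gamma_\beta^{\mathcal E}(v,v_* )(v_*-v)+\sigma D(v,v_* )\xi_1$, where $\xi_1\in\mathbb R^d$ is a random vector of i.i.d. components with zero mean and unit variance, and $D(v,v_* )$ is a $d\times d$ diagonal matrix, either isotropic $D(v,v_* )=\|v_{\beta,\mathcal E}(v,v_* )-v\|_2 I_d$ (then $\kappa:=d$) or anisotropic $D(v,v_* )=\mathrm{diag}\{(v_{\beta,\mathcal E}(v,v_* )-v)_1,\dots,(v_{\beta,\mathcal E}(v,v_* )-v)_d\}$ (then $\kappa:=1$). The density $f$ satisfies, for test functions $\phi$ (including $\phi(v)=v$ and $\phi(v)=|v|^2$), $$\frac{d}{dt}\int_{\mathbb R^d}f(v,t)\phi(v)\,dv=\Big\langle\int_{\mathbb R^{2d}}(\phi(v')-\phi(v))f(v,t)f(v_*,t)\,dv\,dv_*\Big\rangle,$$ where $\langle\cdot\rangle$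 is expectation over the random vector. Here $m(t):=\int v f(v,t)\,dv$ and $V(t):=\frac12\int|v-m(t)|^2f(v,t)\,dv$. *)

theory Defs
  imports "HOL-Probability.Probability"
begin

definition omega_w :: "real \<Rightarrow> ('v \<Rightarrow> real) \<Rightarrow> 'v \<Rightarrow> real" where
  "omega_w \<beta> E v = exp (- \<beta> * E v)"

definition gamma_w :: "real \<Rightarrow> ('v \<Rightarrow> real) \<Rightarrow> 'v \<Rightarrow> 'v \<Rightarrow> real" where
  "gamma_w \<beta> E v w = omega_w \<beta> E w / (omega_w \<beta> E v + omega_w \<beta> E w)"

definition v_best :: "real \<Rightarrow> ('v::real_vector \<Rightarrow> real) \<Rightarrow> 'v \<Rightarrow> 'v \<Rightarrow> 'v" where
  "v_best \<beta> E v w =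
     (1 / (omega_w \<beta> E v + omega_w \<beta> E w)) *\<^sub>R (omega_w \<beta> E v *\<^sub>R v + omega_w \<beta> E w *\<^sub>R w)"

datatype noise = Isotropic | Anisotropic

definition diff_mat :: "noise \<Rightarrow> real \<Rightarrow> (real^'n \<Rightarrow> real) \<Rightarrow> real^'n \<Rightarrow> real^'n \<Rightarrow> real^'n^'n" where
  "diff_mat nt \<beta> E v w =
     (case nt of
        Isotropic \<Rightarrow> mat (norm (v_best \<beta> E v w - v))
      | Anisotropic \<Rightarrow> (\<chi> i j. if i = j then (v_best \<beta> E v w - v) $ i else 0))"

definition kappa :: "noise \<Rightarrow> 'n::finite itself \<Rightarrow> real" where
  "kappa nt _ = (case nt of Isotropic \<Rightarrow> real CARD('n) | Anisotropic \<Rightarrow> 1)"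

definition v_post :: "noise \<Rightarrow> real \<Rightarrow> real \<Rightarrow> real \<Rightarrow> (real^'n \<Rightarrow> real)
      \<Rightarrow> real^'n \<Rightarrow> real^'n \<Rightarrow> real^'n \<Rightarrow> real^'n" where
  "v_post nt \<beta> lam sig E v w xi =
     v + (lam * gamma_w \<beta> E v w) *\<^sub>R (w - v) + sig *\<^sub>R (diff_mat nt \<beta> E v w *v xi)"

definition C_beta :: "real \<Rightarrow> ('v \<Rightarrow> real) \<Rightarrow> real" where
  "C_beta \<beta> E = exp (\<beta> * (Sup (range E) - Inf (range E)))"

definition mean :: "(real^'n \<Rightarrow> real \<Rightarrow> real) \<Rightarrow> real \<Rightarrow> real^'n" where
  "mean f t = (\<integral>v. f v t *\<^sub>R v \<partial>lborel)"

definition Var :: "(real^'n \<Rightarrow> real \<Rightarrow> real) \<Rightarrow> real \<Rightarrow> real" where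
  "Var f t = 1/2 * (\<integral>v. (norm (v - mean f t))\<^sup>2 * f v t \<partial>lborel)"

definition iid_noise :: "'w measure \<Rightarrow> ('w \<Rightarrow> real^'n) \<Rightarrow> bool" where
  "iid_noise P Xi \<longleftrightarrow> prob_space P \<and>
     (\<forall>i. (\<lambda>\<omega>. Xi \<omega> $ i) \<in> borel_measurable P) \<and>
     prob_space.indep_vars P (\<lambda>_. borel) (\<lambda>i \<omega>. Xi \<omega> $ i) UNIV \<and>
     (\<forall>i j. distr P borel (\<lambda>\<omega>. Xi \<omega> $ i) = distr P borel (\<lambda>\<omega>. Xi \<omega> $ j)) \<and>
     (\<forall>i. integrable P (\<lambda>\<omega>. (Xi \<omega> $ i)\<^sup>2)) \<and>
     (\<forall>i. (\<integral>\<omega>. Xi \<omega> $ i \<partial>P) = 0) \<and>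
     (\<forall>i. (\<integral>\<omega>. (Xi \<omega> $ i)\<^sup>2 \<partial>P) = 1)"

definition coll :: "noise \<Rightarrow> real \<Rightarrow> real \<Rightarrow> real \<Rightarrow> (real^'n \<Rightarrow> real) \<Rightarrow> 'w measure
      \<Rightarrow> ('w \<Rightarrow> real^'n) \<Rightarrow> (real^'n \<Rightarrow> real \<Rightarrow> real) \<Rightarrow> (real^'n \<Rightarrow> real) \<Rightarrow> real \<Rightarrow> real" where
  "coll nt \<beta> lam sig E P Xi f phi t =
     (\<integral>\<omega>. (\<integral>v. (\<integral>w. (phi (v_post nt \<beta> lam sig E v w (Xi \<omega>)) - phi v) * f v t * f w t \<partial>lborel) \<partial>lborel) \<partial>P)"

text \<open>f is a family (t \<ge> 0) of probability densities with finite second moments solving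
  the Boltzmann-type equation in weak form for the test functions phi(v) = v
  (i.e. every coordinate v_i) and phi(v) = |v|^2.\<close>
definition boltzmann_solution :: "noise \<Rightarrow> real \<Rightarrow> real \<Rightarrow> real \<Rightarrow> (real^'n \<Rightarrow> real)
      \<Rightarrow> 'w measure \<Rightarrow> ('w \<Rightarrow> real^'n) \<Rightarrow> (real^'n \<Rightarrow> real \<Rightarrow> real) \<Rightarrow> bool" where
  "boltzmann_solution nt \<beta> lam sig E P Xi f \<longleftrightarrow>
     (\<forall>t\<ge>0.
        (\<lambda>v. f v t) \<in> borel_measurable lborel \<and>
        (\<forall>v. 0 \<le> f v t) \<and>
        integrable lborel (\<lambda>v. f v t) \<and>
        (\<integral>v. f v t \<partial>lborel) = 1 \<and>
        integrable lborel (\<lambda>v. (norm v)\<^sup>2 * f v t)) \<and>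
     (\<forall>t\<ge>0. \<forall>i.
        ((\<lambda>s. \<integral>v. v $ i * f v s \<partial>lborel) has_real_derivative
           coll nt \<beta> lam sig E P Xi f (\<lambda>v. v $ i) t) (at t within {0..})) \<and>
     (\<forall>t\<ge>0.
        ((\<lambda>s. \<integral>v. (norm v)\<^sup>2 * f v s \<partial>lborel) has_real_derivative
           coll nt \<beta> lam sig E P Xi f (\<lambda>v. (norm v)\<^sup>2) t) (at t within {0..}))"

end

theory Submission
  imports Defs
begin

(*
  Let V = 1/2 (\<integral>|v|^2 f - |m|^2) and write w for the collision partner v_*.  Testing the
  equation with v_i and |v|^2 expresses V' as the noise expectation of a double integral of the
  velocity jump against f(v) f(w).  The noise components have mean zero and unit variance, so only
  the drift \<lambda>\<gamma>(w - v) and the noise variance \<sigma>^2 \<Sum>_i D_ii^2 = \<sigma>^2 \<kappa> \<gamma>^2 |w - v|^2 survive: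

    V' = \<integral>\<integral> (v - m)\<cdot>\<lambda>\<gamma>(w - v) + (\<lambda>^2 + \<sigma>^2 \<kappa>)/2 \<gamma>^2 |w - v|^2  f(v) f(w) dv dw.

  Symmetrising in (v, w) with \<gamma>(w, v) = 1 - \<gamma>(v, w) and \<gamma> \<ge> 1/(1 + C), where C = C_\<beta> bounds the
  ratio of two Gibbs weights, and using that (v - m)\<cdot>(w - m) integrates to zero, gives
  V' \<le> (\<lambda>^2 + \<sigma>^2 \<kappa> - 2\<lambda>/(1 + C)) V \<le> (\<lambda>^2 + 2\<sigma>^2 \<kappa> - \<lambda>/C) V, and Gronwall's inequality concludes.
  All integrands are continuous with at most quadratic growth, hence integrable against f \<otimes> f.
*)

section \<open>Kernels of controlled growth\<close>

(* Continuity only serves to make kernels Borel measurable on the product space. *)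
definition dominated_kernel ::
    "('a::topological_space \<Rightarrow> 'a \<Rightarrow> real) \<Rightarrow> ('a \<Rightarrow> 'a \<Rightarrow> 'b::real_normed_vector) \<Rightarrow> bool" where
  "dominated_kernel \<phi> h \<longleftrightarrow> continuous_on UNIV (\<lambda>p. h (fst p) (snd p)) \<and>
     (\<exists>K\<ge>0. \<forall>v w. norm (h v w) \<le> K * \<phi> v w)"

abbreviation bounded_kernel :: "('a::topological_space \<Rightarrow> 'a \<Rightarrow> 'b::real_normed_vector) \<Rightarrow> bool" where
  "bounded_kernel \<equiv> dominated_kernel (\<lambda>_ _. 1)"

abbreviation linear_kernel :: "('a::real_normed_vector \<Rightarrow> 'a \<Rightarrow> 'b::real_normed_vector) \<Rightarrow> bool" where
  "linear_kernel \<equiv> dominated_kernel (\<lambda>v w. 1 + norm v + norm w)"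

abbreviation quadratic_kernel :: "('a::real_normed_vector \<Rightarrow> 'a \<Rightarrow> 'b::real_normed_vector) \<Rightarrow> bool" where
  "quadratic_kernel \<equiv> dominated_kernel (\<lambda>v w. 1 + (norm v)\<^sup>2 + (norm w)\<^sup>2)"

lemma dominated_kernelI:
  assumes "continuous_on UNIV (\<lambda>p. h (fst p) (snd p))" and "0 \<le> K"
    and "\<And>v w. norm (h v w) \<le> K * \<phi> v w"
  shows "dominated_kernel \<phi> h"
  unfolding dominated_kernel_def using assms by auto

lemma dominated_kernelE:
  assumes "dominated_kernel \<phi> h"
  obtains K where "0 \<le> K" and "\<And>v w. norm (h v w) \<le> K * \<phi> v w"
  using assms unfolding dominated_kernel_def by auto

lemma dominated_kernel_continuous:
  "dominated_kernel \<phi> h \<Longrightarrow> continuous_on UNIV (\<lambda>p. h (fst p) (snd p))"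
  unfolding dominated_kernel_def by auto

lemma dominated_kernel_mono:
  assumes "dominated_kernel \<phi> h" and "0 \<le> C" and "\<And>v w. \<phi> v w \<le> C * \<psi> v w"
  shows "dominated_kernel \<psi> h"
proof -
  obtain K where "0 \<le> K" and K: "\<And>v w. norm (h v w) \<le> K * \<phi> v w"
    using dominated_kernelE[OF assms(1)] by metis
  have "norm (h v w) \<le> (K * C) * \<psi> v w" for v w
    using K[of v w] mult_left_mono[OF assms(3) \<open>0 \<le> K\<close>, of v w] by (simp add: mult.assoc)
  with \<open>0 \<le> K\<close> assms(2) dominated_kernel_continuous[OF assms(1)] show ?thesis
    by (intro dominated_kernelI[where K = "K * C"]) auto
qed

lemma dominated_kernel_add:
  assumes "dominated_kernel \<phi> a" and "dominated_kernel \<phi> b"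
  shows "dominated_kernel \<phi> (\<lambda>v w. a v w + b v w)"
proof -
  obtain K L where "0 \<le> K" and K: "\<And>v w. norm (a v w) \<le> K * \<phi> v w"
    and "0 \<le> L" and L: "\<And>v w. norm (b v w) \<le> L * \<phi> v w"
    using dominated_kernelE[OF assms(1)] dominated_kernelE[OF assms(2)] by metis
  have "norm (a v w + b v w) \<le> (K + L) * \<phi> v w" for v w
    using order_trans[OF norm_triangle_ineq add_mono[OF K L]] by (simp add: distrib_right)
  with \<open>0 \<le> K\<close> \<open>0 \<le> L\<close> dominated_kernel_continuous[OF assms(1)]
    dominated_kernel_continuous[OF assms(2)] show ?thesis
    by (intro dominated_kernelI[where K = "K + L"] continuous_intros) auto
qed

lemma dominated_kernel_uminus:
  assumes "dominated_kernel \<phi> a"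
  shows "dominated_kernel \<phi> (\<lambda>v w. - a v w)"
proof -
  obtain K where "0 \<le> K" "\<And>v w. norm (a v w) \<le> K * \<phi> v w"
    using dominated_kernelE[OF assms] by metis
  with dominated_kernel_continuous[OF assms] show ?thesis
    by (intro dominated_kernelI[where K = K] continuous_intros) auto
qed

lemma dominated_kernel_diff:
  "dominated_kernel \<phi> a \<Longrightarrow> dominated_kernel \<phi> b \<Longrightarrow> dominated_kernel \<phi> (\<lambda>v w. a v w - b v w)"
  using dominated_kernel_add[of \<phi> a "\<lambda>v w. - b v w"] dominated_kernel_uminus[of \<phi> b] by simp

lemma dominated_kernel_sum:
  assumes "\<And>i. i \<in> S \<Longrightarrow> dominated_kernel \<phi> (a i)" and "\<And>v w. 0 \<le> \<phi> v w"
  shows "dominated_kernel \<phi> (\<lambda>v w. \<Sum>i\<in>S. a i v w)"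
  using assms(1)
proof (induction S rule: infinite_finite_induct)
  case (insert i S)
  then show ?case by (simp add: dominated_kernel_add)
qed (auto intro!: dominated_kernelI[of _ 0] simp: assms(2))

lemma dominated_kernel_norm:
  assumes "dominated_kernel \<phi> a"
  shows "dominated_kernel \<phi> (\<lambda>v w. norm (a v w))"
proof -
  obtain K where "0 \<le> K" "\<And>v w. norm (a v w) \<le> K * \<phi> v w"
    using dominated_kernelE[OF assms] by metis
  with dominated_kernel_continuous[OF assms] show ?thesis
    by (intro dominated_kernelI[where K = K] continuous_intros) auto
qed

lemma dominated_kernel_component:
  assumes "dominated_kernel \<phi> (a :: _ \<Rightarrow> _ \<Rightarrow> real^'n)"
  shows "dominated_kernel \<phi> (\<lambda>v w. a v w $ i)"
proof -
  obtain K where "0 \<le> K" "\<And>v w. norm (a v w) \<le> K * \<phi> v w"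
    using dominated_kernelE[OF assms] by metis
  with dominated_kernel_continuous[OF assms] show ?thesis
    by (intro dominated_kernelI[where K = K] continuous_intros)
      (auto intro: order_trans[OF component_le_norm_cart])
qed

lemma dominated_kernel_bilinear:
  assumes "dominated_kernel \<phi> a" and "dominated_kernel \<psi> b"
    and "bounded_bilinear mul" and "\<And>x y. norm (mul x y) \<le> norm x * norm y"
  shows "dominated_kernel (\<lambda>v w. \<phi> v w * \<psi> v w) (\<lambda>v w. mul (a v w) (b v w))"
proof -
  obtain K L where "0 \<le> K" and K: "\<And>v w. norm (a v w) \<le> K * \<phi> v w"
    and "0 \<le> L" and L: "\<And>v w. norm (b v w) \<le> L * \<psi> v w"
    using dominated_kernelE[OF assms(1)] dominated_kernelE[OF assms(2)] by metis
  have "norm (mul (a v w) (b v w)) \<le> (K * L) * (\<phi> v w * \<psi> v w)" for v w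
  proof -
    have "norm (a v w) * norm (b v w) \<le> (K * \<phi> v w) * (L * \<psi> v w)"
      using K L by (intro mult_mono) (auto intro: order_trans[OF norm_ge_zero])
    then show ?thesis using assms(4)[of "a v w" "b v w"] by (simp add: mult_ac)
  qed
  moreover have "continuous_on UNIV (\<lambda>p. mul (a (fst p) (snd p)) (b (fst p) (snd p)))"
    using dominated_kernel_continuous[OF assms(1)] dominated_kernel_continuous[OF assms(2)]
    by (rule bounded_bilinear.continuous_on[OF assms(3)])
  ultimately show ?thesis using \<open>0 \<le> K\<close> \<open>0 \<le> L\<close> by (intro dominated_kernelI[where K = "K * L"]) auto
qed

lemma dominated_kernel_scaleR:
  "dominated_kernel \<phi> a \<Longrightarrow> dominated_kernel \<psi> b \<Longrightarrow>
    dominated_kernel (\<lambda>v w. \<phi> v w * \<psi> v w) (\<lambda>v w. a v w *\<^sub>R b v w)"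
  by (rule dominated_kernel_bilinear[OF _ _ bounded_bilinear_scaleR]) auto

lemma dominated_kernel_mult:
  "dominated_kernel \<phi> a \<Longrightarrow> dominated_kernel \<psi> (b :: _ \<Rightarrow> _ \<Rightarrow> real) \<Longrightarrow>
    dominated_kernel (\<lambda>v w. \<phi> v w * \<psi> v w) (\<lambda>v w. a v w * b v w)"
  by (rule dominated_kernel_bilinear[OF _ _ bounded_bilinear_mult]) (auto simp: abs_mult)

lemma dominated_kernel_inner:
  "dominated_kernel \<phi> a \<Longrightarrow> dominated_kernel \<psi> b \<Longrightarrow>
    dominated_kernel (\<lambda>v w. \<phi> v w * \<psi> v w) (\<lambda>v w. a v w \<bullet> b v w)"
  by (rule dominated_kernel_bilinear[OF _ _ bounded_bilinear_inner]) (auto simp: Cauchy_Schwarz_ineq2)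

lemma bounded_kernel_const: "bounded_kernel (\<lambda>v w. c)"
  by (intro dominated_kernelI[of _ "norm c"] continuous_intros) auto

lemma bounded_kernel_scaleR:
  "bounded_kernel a \<Longrightarrow> dominated_kernel \<phi> b \<Longrightarrow> dominated_kernel \<phi> (\<lambda>v w. a v w *\<^sub>R b v w)"
  using dominated_kernel_scaleR[of "\<lambda>_ _. 1" a \<phi> b] by simp

lemma bounded_kernel_mult:
  "bounded_kernel a \<Longrightarrow> dominated_kernel \<phi> b \<Longrightarrow> dominated_kernel \<phi> (\<lambda>v w. a v w * b v w :: real)"
  using dominated_kernel_mult[of "\<lambda>_ _. 1" a \<phi> b] by simp

lemma bounded_kernel_power2:
  assumes "bounded_kernel a"
  shows "bounded_kernel (\<lambda>v w. (a v w)\<^sup>2 :: real)"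
  using bounded_kernel_mult[OF assms assms] by (simp add: power2_eq_square)

lemma quadratic_kernel_swap:
  assumes "quadratic_kernel h"
  shows "quadratic_kernel (\<lambda>v w. h w v)"
proof -
  obtain K where "0 \<le> K" and K: "\<And>v w. norm (h v w) \<le> K * (1 + (norm v)\<^sup>2 + (norm w)\<^sup>2)"
    using dominated_kernelE[OF assms] by metis
  have "continuous_on UNIV (\<lambda>p. (\<lambda>p. h (fst p) (snd p)) (snd p, fst p))"
    by (rule continuous_on_compose2[OF dominated_kernel_continuous[OF assms]])
      (simp_all add: continuous_on_fst continuous_on_snd continuous_on_Pair continuous_on_id)
  moreover have "norm (h w v) \<le> K * (1 + (norm v)\<^sup>2 + (norm w)\<^sup>2)" for v w
    using K[of w v] by (simp add: ac_simps)
  ultimately show ?thesis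
    using \<open>0 \<le> K\<close> by (intro dominated_kernelI[where K = K]) auto
qed

lemma linear_kernel_fst: "linear_kernel (\<lambda>v w. v)"
  by (intro dominated_kernelI[of _ 1] continuous_intros) auto

lemma linear_kernel_snd: "linear_kernel (\<lambda>v w. w)"
  by (intro dominated_kernelI[of _ 1] continuous_intros) auto

lemma linear_kernel_const: "linear_kernel (\<lambda>v w. c)"
  by (rule dominated_kernel_mono[OF bounded_kernel_const, of 1]) auto

lemma one_add_add_le: "1 + x + y \<le> 2 * (1 + x\<^sup>2 + y\<^sup>2)" for x y :: real
proof -
  have "2 * (1 + x\<^sup>2 + y\<^sup>2) - (1 + x + y) = 2 * (x - 1/4)\<^sup>2 + 2 * (y - 1/4)\<^sup>2 + 3/4"
    by (simp add: power2_eq_square algebra_simps)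
  then show ?thesis using zero_le_power2[of "x - 1/4"] zero_le_power2[of "y - 1/4"] by linarith
qed

lemma one_add_add_sq_le: "(1 + x + y)\<^sup>2 \<le> 3 * (1 + x\<^sup>2 + y\<^sup>2)" for x y :: real
proof -
  have "3 * (1 + x\<^sup>2 + y\<^sup>2) - (1 + x + y)\<^sup>2 = (1 - x)\<^sup>2 + (1 - y)\<^sup>2 + (x - y)\<^sup>2"
    by (simp add: power2_eq_square algebra_simps)
  then show ?thesis using zero_le_power2[of "1 - x"] zero_le_power2[of "1 - y"] zero_le_power2[of "x - y"]
    by linarith
qed

lemma linear_kernel_imp_quadratic: "linear_kernel a \<Longrightarrow> quadratic_kernel a"
  by (erule dominated_kernel_mono[of _ _ 2]) (simp_all only: one_add_add_le zero_le_numeral)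

lemma quadratic_kernel_mult:
  assumes "linear_kernel a" and "linear_kernel b"
  shows "quadratic_kernel (\<lambda>v w. a v w * b v w :: real)"
proof (rule dominated_kernel_mono[OF dominated_kernel_mult[OF assms]])
  show "(1 + norm v + norm w) * (1 + norm v + norm w) \<le> 3 * (1 + (norm v)\<^sup>2 + (norm w)\<^sup>2)"
    for v w :: 'a
    using one_add_add_sq_le[of "norm v" "norm w"] by (simp add: power2_eq_square)
qed simp

lemma quadratic_kernel_inner:
  assumes "linear_kernel a" and "linear_kernel b"
  shows "quadratic_kernel (\<lambda>v w. a v w \<bullet> b v w)"
proof (rule dominated_kernel_mono[OF dominated_kernel_inner[OF assms]])
  show "(1 + norm v + norm w) * (1 + norm v + norm w) \<le> 3 * (1 + (norm v)\<^sup>2 + (norm w)\<^sup>2)"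
    for v w :: 'a
    using one_add_add_sq_le[of "norm v" "norm w"] by (simp add: power2_eq_square)
qed simp

lemma quadratic_kernel_norm_sq:
  "linear_kernel (a :: _ \<Rightarrow> _ \<Rightarrow> 'b::real_inner) \<Longrightarrow> quadratic_kernel (\<lambda>v w. (norm (a v w))\<^sup>2)"
  using quadratic_kernel_inner[of a a] by (simp add: power2_norm_eq_inner)

lemma quadratic_kernel_power2:
  "linear_kernel a \<Longrightarrow> quadratic_kernel (\<lambda>v w. (a v w)\<^sup>2 :: real)"
  using quadratic_kernel_mult[of a a] by (simp add: power2_eq_square)

lemma dominated_kernel_cmult:
  "dominated_kernel \<phi> b \<Longrightarrow> dominated_kernel \<phi> (\<lambda>v w. c * b v w :: real)"
  using bounded_kernel_mult[OF bounded_kernel_const] .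

section \<open>Double integrals against a density\<close>

locale finite_variance_density =
  fixes g :: "'a::euclidean_space \<Rightarrow> real"
  assumes borel_measurable_density [measurable]: "g \<in> borel_measurable lborel"
    and density_nonneg: "\<And>v. 0 \<le> g v"
    and integrable_density: "integrable lborel g"
    and integral_density: "(\<integral>v. g v \<partial>lborel) = 1"
    and integrable_second_moment: "integrable lborel (\<lambda>v. (norm v)\<^sup>2 * g v)"
begin

definition second_moment :: real where
  "second_moment = (\<integral>v. (norm v)\<^sup>2 * g v \<partial>lborel)"

definition center :: 'a where
  "center = (\<integral>v. g v *\<^sub>R v \<partial>lborel)"

definition pair_integral :: "('a \<Rightarrow> 'a \<Rightarrow> real) \<Rightarrow> real" where
  "pair_integral h = (\<integral>v. (\<integral>w. h v w * g v * g w \<partial>lborel) \<partial>lborel)"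

lemma integrable_quadratic_moment: "integrable lborel (\<lambda>v. (a + b * (norm v)\<^sup>2) * g v)"
  using integrable_density integrable_second_moment
  by (simp add: distrib_right mult.assoc)

lemma integral_quadratic_moment: "(\<integral>v. (a + b * (norm v)\<^sup>2) * g v \<partial>lborel) = a + b * second_moment"
  using integrable_density integrable_second_moment
  by (simp add: distrib_right mult.assoc integral_density second_moment_def)

lemma quadratic_kernel_measurable:
  assumes "quadratic_kernel h"
  shows "(\<lambda>p. h (fst p) (snd p)) \<in> borel_measurable (lborel \<Otimes>\<^sub>M lborel)"
    and "(\<lambda>w. h v w) \<in> borel_measurable lborel"
proof -
  have cont: "continuous_on UNIV (\<lambda>p. h (fst p) (snd p))"
    using assms by (rule dominated_kernel_continuous)
  then show "(\<lambda>p. h (fst p) (snd p)) \<in> borel_measurable (lborel \<Otimes>\<^sub>M lborel)"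
    unfolding lborel_prod by (auto intro: borel_measurable_continuous_onI)
  have "continuous_on UNIV (\<lambda>w. (\<lambda>p. h (fst p) (snd p)) (v, w))"
    by (rule continuous_on_compose2[OF cont]) (auto intro: continuous_intros)
  then show "(\<lambda>w. h v w) \<in> borel_measurable lborel"
    by (auto intro: borel_measurable_continuous_onI)
qed

lemma pair_integrand_measurable:
  assumes "quadratic_kernel h"
  shows "(\<lambda>(v, w). h v w * g v * g w) \<in> borel_measurable (lborel \<Otimes>\<^sub>M lborel)"
  unfolding case_prod_beta'
  by (intro borel_measurable_times quadratic_kernel_measurable(1)[OF assms]
      measurable_compose[OF measurable_fst borel_measurable_density]
      measurable_compose[OF measurable_snd borel_measurable_density])

lemma pair_integrand_bound:
  assumes "\<And>v w. norm (h v w) \<le> K * (1 + (norm v)\<^sup>2 + (norm w)\<^sup>2)"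
  shows "\<bar>h v w * g v * g w\<bar> \<le> K * g v * (((1 + (norm v)\<^sup>2) + 1 * (norm w)\<^sup>2) * g w)"
proof -
  have "\<bar>h v w * g v * g w\<bar> = norm (h v w) * (g v * g w)"
    by (simp add: abs_mult density_nonneg)
  also have "\<dots> \<le> K * (1 + (norm v)\<^sup>2 + (norm w)\<^sup>2) * (g v * g w)"
    using assms by (rule mult_right_mono) (simp add: density_nonneg)
  finally show ?thesis by (simp add: mult_ac)
qed

lemma integrable_pair_integrand:
  assumes "quadratic_kernel h"
  shows "integrable lborel (\<lambda>w. h v w * g v * g w)"
proof -
  obtain K where "0 \<le> K" "\<And>v w. norm (h v w) \<le> K * (1 + (norm v)\<^sup>2 + (norm w)\<^sup>2)"
    using dominated_kernelE[OF assms] by metis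
  note K = pair_integrand_bound[OF this(2)]
  show ?thesis
  proof (rule Bochner_Integration.integrable_bound)
    show "integrable lborel (\<lambda>w. K * g v * (((1 + (norm v)\<^sup>2) + 1 * (norm w)\<^sup>2) * g w))"
      by (intro integrable_mult_right integrable_quadratic_moment)
    show "AE w in lborel. norm (h v w * g v * g w) \<le>
        norm (K * g v * (((1 + (norm v)\<^sup>2) + 1 * (norm w)\<^sup>2) * g w))"
      unfolding real_norm_def by (intro AE_I2 order_trans[OF K abs_ge_self])
  qed (intro borel_measurable_times quadratic_kernel_measurable(2)[OF assms] borel_measurable_const
      borel_measurable_density)
qed

lemma integrable_pair_integral:
  assumes "quadratic_kernel h"
  shows "integrable lborel (\<lambda>v. \<integral>w. h v w * g v * g w \<partial>lborel)"
proof -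
  obtain K where "0 \<le> K" "\<And>v w. norm (h v w) \<le> K * (1 + (norm v)\<^sup>2 + (norm w)\<^sup>2)"
    using dominated_kernelE[OF assms] by metis
  note K = pair_integrand_bound[OF this(2)]
  have meas: "(\<lambda>v. \<integral>w. h v w * g v * g w \<partial>lborel) \<in> borel_measurable lborel"
    using pair_integrand_measurable[OF assms] by (rule lborel.borel_measurable_lebesgue_integral)
  have bound: "\<bar>\<integral>w. h v w * g v * g w \<partial>lborel\<bar> \<le> ((K * (1 + second_moment)) + K * (norm v)\<^sup>2) * g v"
    for v
  proof -
    have "\<bar>\<integral>w. h v w * g v * g w \<partial>lborel\<bar> \<le>
        (\<integral>w. K * g v * (((1 + (norm v)\<^sup>2) + 1 * (norm w)\<^sup>2) * g w) \<partial>lborel)"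
      using K by (intro integral_abs_bound_integral integrable_pair_integrand assms
          integrable_mult_right integrable_quadratic_moment)
    also have "\<dots> = ((K * (1 + second_moment)) + K * (norm v)\<^sup>2) * g v"
      by (simp only: integral_mult_right_zero integral_quadratic_moment) (simp add: algebra_simps)
    finally show ?thesis .
  qed
  show ?thesis
  proof (rule Bochner_Integration.integrable_bound[OF integrable_quadratic_moment])
    show "AE v in lborel. norm (\<integral>w. h v w * g v * g w \<partial>lborel) \<le>
        norm ((K * (1 + second_moment) + K * (norm v)\<^sup>2) * g v)"
      unfolding real_norm_def using bound by (intro AE_I2 order_trans[OF _ abs_ge_self])
  qed (fact meas)
qed

lemma pair_integral_add:
  "quadratic_kernel a \<Longrightarrow> quadratic_kernel b \<Longrightarrow>
    pair_integral (\<lambda>v w. a v w + b v w) = pair_integral a + pair_integral b"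
  unfolding pair_integral_def
  by (simp add: distrib_right integral_add integrable_pair_integrand integrable_pair_integral
      flip: integral_add)

lemma pair_integral_diff:
  "quadratic_kernel a \<Longrightarrow> quadratic_kernel b \<Longrightarrow>
    pair_integral (\<lambda>v w. a v w - b v w) = pair_integral a - pair_integral b"
  unfolding pair_integral_def
  by (simp add: left_diff_distrib integral_diff integrable_pair_integrand integrable_pair_integral
      flip: integral_diff)

lemma pair_integral_cmult: "pair_integral (\<lambda>v w. c * h v w) = c * pair_integral h"
  unfolding pair_integral_def by (simp add: mult.assoc)

lemma pair_integral_sum:
  "(\<And>i. i \<in> S \<Longrightarrow> quadratic_kernel (h i)) \<Longrightarrow>
    pair_integral (\<lambda>v w. \<Sum>i\<in>S. h i v w) = (\<Sum>i\<in>S. pair_integral (h i))"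
proof (induction S rule: infinite_finite_induct)
  case (insert i S)
  then show ?case by (simp add: pair_integral_add dominated_kernel_sum)
qed (simp_all add: pair_integral_def)

lemma pair_integral_mono:
  "quadratic_kernel a \<Longrightarrow> quadratic_kernel b \<Longrightarrow> (\<And>v w. a v w \<le> b v w) \<Longrightarrow>
    pair_integral a \<le> pair_integral b"
  unfolding pair_integral_def
  by (intro integral_mono integrable_pair_integral integrable_pair_integrand mult_right_mono
      density_nonneg) auto

lemma pair_integral_product:
  "pair_integral (\<lambda>v w. p v * q w) = (\<integral>v. p v * g v \<partial>lborel) * (\<integral>w. q w * g w \<partial>lborel)"
proof -
  have "(\<lambda>w. p v * q w * g v * g w) = (\<lambda>w. (p v * g v) * (q w * g w))" for v
    by (auto simp: mult_ac)
  then show ?thesis unfolding pair_integral_def by simp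
qed

lemma pair_integral_fst: "pair_integral (\<lambda>v w. p v) = (\<integral>v. p v * g v \<partial>lborel)"
  using pair_integral_product[of p "\<lambda>_. 1"] by (simp add: integral_density)

lemma pair_integral_snd: "pair_integral (\<lambda>v w. q w) = (\<integral>w. q w * g w \<partial>lborel)"
  using pair_integral_product[of "\<lambda>_. 1" q] by (simp add: integral_density)

lemma pair_integral_swap:
  assumes "quadratic_kernel h"
  shows "pair_integral (\<lambda>v w. h w v) = pair_integral h"
proof -
  have "integrable (lborel \<Otimes>\<^sub>M lborel) (\<lambda>(v, w). h v w * g v * g w)"
  proof (rule lborel_pair.Fubini_integrable)
    show "(\<lambda>(v, w). h v w * g v * g w) \<in> borel_measurable (lborel \<Otimes>\<^sub>M lborel)"
      using assms by (rule pair_integrand_measurable)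
    have "norm (h v w * g v * g w) = norm (h v w) * g v * g w" for v w
      by (simp add: abs_mult density_nonneg)
    moreover have "quadratic_kernel (\<lambda>v w. norm (h v w))"
      using assms by (rule dominated_kernel_norm)
    ultimately show "integrable lborel (\<lambda>v. \<integral>w. norm (case (v, w) of (v, w) \<Rightarrow> h v w * g v * g w) \<partial>lborel)"
      using integrable_pair_integral by simp
    show "AE v in lborel. integrable lborel (\<lambda>w. case (v, w) of (v, w) \<Rightarrow> h v w * g v * g w)"
      using integrable_pair_integrand[OF assms] by simp
  qed
  from lborel_pair.Fubini_integral[OF this] show ?thesis
    unfolding pair_integral_def by (simp add: mult_ac)
qed

lemma integrable_first_moment: "integrable lborel (\<lambda>v. g v *\<^sub>R v)"
proof (rule Bochner_Integration.integrable_bound[OF integrable_quadratic_moment[of 1 2]])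
  show "AE v in lborel. norm (g v *\<^sub>R v) \<le> norm ((1 + 2 * (norm v)\<^sup>2) * g v)"
  proof (intro AE_I2)
    fix v :: 'a
    have "norm v \<le> 1 + 2 * (norm v)\<^sup>2"
      using one_add_add_le[of "norm v" 0] by simp
    then have "norm v * g v \<le> (1 + 2 * (norm v)\<^sup>2) * g v"
      using density_nonneg by (rule mult_right_mono)
    then show "norm (g v *\<^sub>R v) \<le> norm ((1 + 2 * (norm v)\<^sup>2) * g v)"
      using density_nonneg[of v] by (simp add: mult.commute)
  qed
qed simp

lemma integrable_centered_first_moment: "integrable lborel (\<lambda>v. g v *\<^sub>R (v - c))"
  using integrable_first_moment integrable_density by (simp add: scaleR_diff_right)

lemma integral_centered_first_moment: "(\<integral>v. g v *\<^sub>R (v - center) \<partial>lborel) = 0"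
  using integrable_first_moment integrable_density
  by (simp add: scaleR_diff_right integral_density center_def)

lemma pair_integral_centered_inner: "pair_integral (\<lambda>v w. (v - center) \<bullet> (w - center)) = 0"
proof -
  have "(\<integral>w. ((v - center) \<bullet> (w - center)) * g v * g w \<partial>lborel) = 0" for v
  proof -
    have "(\<lambda>w. ((v - center) \<bullet> (w - center)) * g v * g w) =
        (\<lambda>w. g v * ((v - center) \<bullet> (g w *\<^sub>R (w - center))))"
      by (auto simp: mult_ac)
    then have "(\<integral>w. ((v - center) \<bullet> (w - center)) * g v * g w \<partial>lborel)
        = g v * ((v - center) \<bullet> (\<integral>w. g w *\<^sub>R (w - center) \<partial>lborel))"
      using integral_inner_right[OF integrable_centered_first_moment, of "v - center" center]
      by (simp only: integral_mult_right_zero)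
    then show ?thesis by (simp add: integral_centered_first_moment)
  qed
  then show ?thesis unfolding pair_integral_def by simp
qed

lemma integral_centered_second_moment:
  "(\<integral>v. (norm (v - center))\<^sup>2 * g v \<partial>lborel) = second_moment - (norm center)\<^sup>2"
proof -
  have int: "integrable lborel (\<lambda>v. g v * (v \<bullet> center))"
    using integrable_inner_left[OF integrable_first_moment, of center] by simp
  have "(\<integral>v. g v * (v \<bullet> center) \<partial>lborel) = (norm center)\<^sup>2"
    using integral_inner_left[of center lborel "\<lambda>v. g v *\<^sub>R v"] integrable_first_moment
    unfolding center_def by (simp add: power2_norm_eq_inner)
  moreover have "(norm (v - center))\<^sup>2 * g v =
      (norm v)\<^sup>2 * g v - 2 * (g v * (v \<bullet> center)) + (norm center)\<^sup>2 * g v" for v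
    by (simp add: power2_norm_eq_inner inner_diff_left inner_diff_right inner_commute algebra_simps)
  ultimately show ?thesis
    using int integrable_density integrable_second_moment
    by (simp add: integral_density second_moment_def)
qed

end

section \<open>Gibbs weights and the binary interaction\<close>

lemma gamma_w_nonneg: "0 \<le> gamma_w \<beta> E v w"
  unfolding gamma_w_def omega_w_def by (simp add: add_pos_pos)

lemma gamma_w_le_one: "gamma_w \<beta> E v w \<le> 1"
  unfolding gamma_w_def omega_w_def by (simp add: add_pos_pos)

lemma omega_w_sum_pos: "0 < omega_w \<beta> E v + omega_w \<beta> E w"
  unfolding omega_w_def by (simp add: add_pos_pos)

lemma gamma_w_swap: "gamma_w \<beta> E w v = 1 - gamma_w \<beta> E v w"
  using omega_w_sum_pos[of \<beta> E v w] unfolding gamma_w_def by (simp add: field_simps add.commute)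

lemma weighted_mean_minus:
  fixes v w :: "'a::real_vector"
  assumes "a + b \<noteq> 0"
  shows "(1 / (a + b)) *\<^sub>R (a *\<^sub>R v + b *\<^sub>R w) - v = (b / (a + b)) *\<^sub>R (w - v)"
proof -
  have "(1 / (a + b)) *\<^sub>R (a *\<^sub>R v + b *\<^sub>R w) - v =
      (1 / (a + b)) *\<^sub>R (a *\<^sub>R v + b *\<^sub>R w) - (1 / (a + b)) *\<^sub>R ((a + b) *\<^sub>R v)"
    using assms by simp
  also have "\<dots> = (1 / (a + b)) *\<^sub>R (b *\<^sub>R (w - v))"
    by (simp only: scaleR_diff_right[symmetric]) (simp add: algebra_simps)
  finally show ?thesis by simp
qed

lemma v_best_minus: "v_best \<beta> E v w - v = gamma_w \<beta> E v w *\<^sub>R (w - v)"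
  unfolding v_best_def gamma_w_def
  using omega_w_sum_pos[of \<beta> E v w] by (intro weighted_mean_minus) simp

lemma continuous_on_gamma_w:
  assumes "continuous_on UNIV E"
  shows "continuous_on UNIV (\<lambda>p. gamma_w \<beta> E (fst p) (snd p))"
proof -
  have "continuous_on UNIV (\<lambda>p. E (fst p))" "continuous_on UNIV (\<lambda>p. E (snd p))"
    by (auto intro!: continuous_on_compose2[OF assms] continuous_intros)
  then show ?thesis
    unfolding gamma_w_def omega_w_def by (intro continuous_intros) (auto simp: add_nonneg_eq_0_iff)
qed

lemma exp_weight_le_C_beta:
  assumes "bdd_above (range E)" and "bdd_below (range E)" and "0 \<le> \<beta>"
  shows "omega_w \<beta> E v \<le> C_beta \<beta> E * omega_w \<beta> E w"
proof -
  have "E w - E v \<le> Sup (range E) - Inf (range E)"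
    using cSup_upper[OF _ assms(1), of "E w"] cInf_lower[OF _ assms(2), of "E v"] by auto
  then have "- \<beta> * E v \<le> \<beta> * (Sup (range E) - Inf (range E)) + - \<beta> * E w"
    using mult_left_mono[OF _ assms(3)] by (fastforce simp: algebra_simps)
  then show ?thesis
    unfolding omega_w_def C_beta_def by (simp flip: exp_add)
qed

lemma C_beta_ge_one:
  assumes "bdd_above (range E)" and "bdd_below (range E)" and "0 \<le> \<beta>"
  shows "1 \<le> C_beta \<beta> E"
  using exp_weight_le_C_beta[OF assms, of v v] by (simp add: omega_w_def)

lemma gamma_w_ge:
  assumes "bdd_above (range E)" and "bdd_below (range E)" and "0 \<le> \<beta>"
  shows "1 / (1 + C_beta \<beta> E) \<le> gamma_w \<beta> E v w"
proof -
  have "omega_w \<beta> E v \<le> C_beta \<beta> E * omega_w \<beta> E w"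
    by (rule exp_weight_le_C_beta[OF assms])
  moreover have "0 < omega_w \<beta> E v" "0 < omega_w \<beta> E w"
    unfolding omega_w_def by auto
  moreover have "1 / (1 + C) \<le> b / (a + b)" if "0 < a" "0 < b" "1 \<le> C" "a \<le> C * b" for a b C :: real
    using that by (simp add: divide_simps algebra_simps)
  ultimately show ?thesis
    using C_beta_ge_one[OF assms] unfolding gamma_w_def by simp
qed

lemma power2_norm_vec: "(norm x)\<^sup>2 = (\<Sum>i\<in>UNIV. (x $ i)\<^sup>2)" for x :: "real^'n"
  unfolding power2_norm_eq_inner inner_vec_def by (simp add: power2_eq_square)

lemma diagonal_matrix_vector_mult_nth:
  assumes "\<And>j. j \<noteq> i \<Longrightarrow> A $ i $ j = 0"
  shows "(A *v x) $ i = A $ i $ i * x $ i"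
proof -
  have "(\<Sum>j\<in>UNIV. A $ i $ j * x $ j) = (\<Sum>j\<in>UNIV. if j = i then A $ i $ i * x $ i else 0)"
    by (rule sum.cong) (auto simp: assms)
  then show ?thesis by (simp add: matrix_vector_mult_def)
qed

lemma diff_mat_off_diagonal: "j \<noteq> i \<Longrightarrow> diff_mat nt \<beta> E v w $ i $ j = 0"
  unfolding diff_mat_def by (cases nt) (auto simp: mat_def)

lemma diff_mat_diagonal:
  "diff_mat nt \<beta> E v w $ i $ i = (case nt of
      Isotropic \<Rightarrow> norm (gamma_w \<beta> E v w *\<^sub>R (w - v))
    | Anisotropic \<Rightarrow> gamma_w \<beta> E v w * (w - v) $ i)"
  unfolding diff_mat_def v_best_minus by (cases nt) (auto simp: mat_def)

lemma sum_diff_mat_diagonal_sq: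
  "(\<Sum>i\<in>UNIV. (diff_mat nt \<beta> E v w $ i $ i)\<^sup>2) =
    kappa nt TYPE('n) * (gamma_w \<beta> E v w)\<^sup>2 * (norm (w - v))\<^sup>2"
  for v w :: "real^'n"
  unfolding diff_mat_diagonal kappa_def
  by (cases nt) (simp_all add: power_mult_distrib sum_distrib_left mult.assoc
      power2_norm_vec[of "w - v"])

lemma kappa_pos: "0 < kappa nt TYPE('n::finite)"
  unfolding kappa_def by (cases nt) auto

lemma iid_noise_moments:
  assumes "iid_noise P Xi"
  shows "prob_space P" and "integrable P (\<lambda>\<omega>. Xi \<omega> $ i)" and "integrable P (\<lambda>\<omega>. (Xi \<omega> $ i)\<^sup>2)"
    and "(\<integral>\<omega>. Xi \<omega> $ i \<partial>P) = 0" and "(\<integral>\<omega>. (Xi \<omega> $ i)\<^sup>2 \<partial>P) = 1"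
proof -
  show "prob_space P"
    using assms unfolding iid_noise_def by auto
  then interpret prob_space P .
  show "integrable P (\<lambda>\<omega>. (Xi \<omega> $ i)\<^sup>2)" "(\<integral>\<omega>. Xi \<omega> $ i \<partial>P) = 0" "(\<integral>\<omega>. (Xi \<omega> $ i)\<^sup>2 \<partial>P) = 1"
    using assms unfolding iid_noise_def by auto
  then show "integrable P (\<lambda>\<omega>. Xi \<omega> $ i)"
    using assms unfolding iid_noise_def by (auto intro: square_integrable_imp_integrable)
qed

lemma expectation_noise_affine:
  assumes "iid_noise P Xi"
  shows "(\<integral>\<omega>. c + a * Xi \<omega> $ i \<partial>P) = c"
proof -
  interpret prob_space P using iid_noise_moments(1)[OF assms] .
  show ?thesis using iid_noise_moments(2,4)[OF assms] by (simp add: prob_space)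
qed

lemma expectation_noise_quadratic:
  assumes "iid_noise P Xi"
  shows "(\<integral>\<omega>. c + (\<Sum>i\<in>UNIV. a i * Xi \<omega> $ i) + (\<Sum>i\<in>UNIV. b i * (Xi \<omega> $ i)\<^sup>2) \<partial>P)
    = c + (\<Sum>i\<in>UNIV. b i)"
proof -
  interpret prob_space P using iid_noise_moments(1)[OF assms] .
  show ?thesis using iid_noise_moments(2-5)[OF assms] by (simp add: prob_space integral_sum)
qed

(* A, B and X stand for |v - c|^2, |w - c|^2 and (v - c)\<cdot>(w - c), and \<gamma> for \<gamma>(v, w). *)
lemma symmetrized_dissipation_le:
  fixes A B X \<gamma> \<delta> lam \<mu> :: real
  assumes "0 \<le> A" and "0 \<le> B" and "0 \<le> A + B - 2 * X"
    and "0 \<le> \<gamma>" and "\<gamma> \<le> 1" and "\<delta> \<le> \<gamma>" and "\<delta> \<le> 1 - \<gamma>" and "0 \<le> lam" and "0 \<le> \<mu>"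
  shows "(lam * \<gamma> * (X - A) + \<mu> * \<gamma>\<^sup>2 * (A + B - 2 * X))
      + (lam * (1 - \<gamma>) * (X - B) + \<mu> * (1 - \<gamma>)\<^sup>2 * (A + B - 2 * X))
    \<le> (\<mu> - lam * \<delta>) * (A + B) + (lam - 2 * \<mu>) * X"
proof -
  have "\<delta> * (A + B) \<le> \<gamma> * A + (1 - \<gamma>) * B"
    using assms by (simp add: distrib_left add_mono mult_right_mono)
  then have "lam * (\<delta> * (A + B)) \<le> lam * (\<gamma> * A + (1 - \<gamma>) * B)"
    using assms(8) by (rule mult_left_mono)
  moreover have "\<mu> * (\<gamma>\<^sup>2 + (1 - \<gamma>)\<^sup>2) * (A + B - 2 * X) \<le> \<mu> * (A + B - 2 * X)"
  proof -
    have "\<gamma>\<^sup>2 + (1 - \<gamma>)\<^sup>2 \<le> 1"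
      using assms(4,5) mult_nonneg_nonneg[of \<gamma> "1 - \<gamma>"] by (simp add: power2_eq_square algebra_simps)
    from mult_left_mono[OF mult_left_le[OF this assms(3)] assms(9)] show ?thesis
      by (simp add: mult_ac)
  qed
  ultimately show ?thesis by (simp add: power2_eq_square algebra_simps)
qed

lemma symmetrized_rate_le:
  fixes lam s C :: real
  assumes "1 \<le> C" and "0 \<le> lam" and "0 \<le> s"
  shows "lam\<^sup>2 + s - 2 * lam / (1 + C) \<le> lam\<^sup>2 + 2 * s - lam / C"
proof -
  have "lam * (1 + C) \<le> 2 * lam * C"
    using mult_left_mono[OF assms(1,2)] by (simp add: algebra_simps)
  then have "lam / C \<le> 2 * lam / (1 + C)"
    using assms(1) by (simp add: field_simps)
  with assms(3) show ?thesis by linarith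
qed

locale binary_interaction =
  fixes nt :: noise and \<beta> lam sig :: real and E :: "real^'n \<Rightarrow> real"
  assumes continuous_E: "continuous_on UNIV E"
begin

definition drift :: "real^'n \<Rightarrow> real^'n \<Rightarrow> real^'n" where
  "drift v w = (lam * gamma_w \<beta> E v w) *\<^sub>R (w - v)"

definition noise_coeff :: "'n \<Rightarrow> real^'n \<Rightarrow> real^'n \<Rightarrow> real" where
  "noise_coeff i v w = diff_mat nt \<beta> E v w $ i $ i"

definition energy_gain :: "real^'n \<Rightarrow> real^'n \<Rightarrow> real" where
  "energy_gain v w = 2 * (v \<bullet> drift v w) +
     (lam\<^sup>2 + sig\<^sup>2 * kappa nt TYPE('n)) * (gamma_w \<beta> E v w)\<^sup>2 * (norm (w - v))\<^sup>2"

lemma bounded_kernel_gamma_w: "bounded_kernel (gamma_w \<beta> E)"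
proof (rule dominated_kernelI)
  show "continuous_on UNIV (\<lambda>p. gamma_w \<beta> E (fst p) (snd p))"
    using continuous_E by (rule continuous_on_gamma_w)
  show "norm (gamma_w \<beta> E v w) \<le> 1 * 1" for v w
    using gamma_w_nonneg[of \<beta> E v w] gamma_w_le_one[of \<beta> E v w] by simp
qed simp

lemma linear_kernel_diff: "linear_kernel (\<lambda>v w. w - v)"
  by (intro dominated_kernel_diff linear_kernel_fst linear_kernel_snd)

lemma linear_kernel_drift: "linear_kernel drift"
  unfolding drift_def[abs_def]
  by (intro bounded_kernel_scaleR bounded_kernel_mult bounded_kernel_const bounded_kernel_gamma_w
      linear_kernel_diff)

lemma linear_kernel_noise_coeff: "linear_kernel (noise_coeff i)"
proof -
  have gain: "linear_kernel (\<lambda>v w. gamma_w \<beta> E v w *\<^sub>R (w - v))"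
    by (intro bounded_kernel_scaleR bounded_kernel_gamma_w linear_kernel_diff)
  show ?thesis
  proof (cases nt)
    case Isotropic
    then show ?thesis
      unfolding noise_coeff_def[abs_def] diff_mat_diagonal
      using dominated_kernel_norm[OF gain] by simp
  next
    case Anisotropic
    then show ?thesis
      unfolding noise_coeff_def[abs_def] diff_mat_diagonal
      using dominated_kernel_component[OF gain, of i] by simp
  qed
qed

lemma quadratic_kernel_energy_gain: "quadratic_kernel energy_gain"
  unfolding energy_gain_def[abs_def]
  by (intro dominated_kernel_add dominated_kernel_cmult quadratic_kernel_inner linear_kernel_fst
      linear_kernel_drift bounded_kernel_mult bounded_kernel_power2 bounded_kernel_gamma_w
      quadratic_kernel_norm_sq linear_kernel_diff)

lemma norm_drift_sq: "(norm (drift v w))\<^sup>2 = lam\<^sup>2 * (gamma_w \<beta> E v w)\<^sup>2 * (norm (w - v))\<^sup>2"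
  by (simp add: drift_def power_mult_distrib)

lemma v_post_nth:
  "v_post nt \<beta> lam sig E v w x $ i = v $ i + drift v w $ i + sig * noise_coeff i v w * x $ i"
  by (simp add: v_post_def drift_def noise_coeff_def diagonal_matrix_vector_mult_nth
      diff_mat_off_diagonal)

lemma norm_v_post_sq_diff:
  "(norm (v_post nt \<beta> lam sig E v w x))\<^sup>2 - (norm v)\<^sup>2 =
     (2 * (v \<bullet> drift v w) + (norm (drift v w))\<^sup>2)
     + (\<Sum>i\<in>UNIV. x $ i * (2 * sig * noise_coeff i v w * (v $ i + drift v w $ i)))
     + (\<Sum>i\<in>UNIV. (x $ i)\<^sup>2 * (sig\<^sup>2 * (noise_coeff i v w)\<^sup>2))"
proof -
  have "(norm (v_post nt \<beta> lam sig E v w x))\<^sup>2 - (norm v)\<^sup>2 =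
      (\<Sum>i\<in>UNIV. (v_post nt \<beta> lam sig E v w x $ i)\<^sup>2 - (v $ i)\<^sup>2)"
    by (simp add: power2_norm_vec sum_subtractf)
  also have "\<dots> = (\<Sum>i\<in>UNIV. (2 * (v $ i * drift v w $ i) + (drift v w $ i)\<^sup>2)
      + x $ i * (2 * sig * noise_coeff i v w * (v $ i + drift v w $ i))
      + (x $ i)\<^sup>2 * (sig\<^sup>2 * (noise_coeff i v w)\<^sup>2))"
    by (rule sum.cong[OF refl]) (simp add: v_post_nth power2_eq_square algebra_simps)
  also have "\<dots> = (2 * (v \<bullet> drift v w) + (norm (drift v w))\<^sup>2)
     + (\<Sum>i\<in>UNIV. x $ i * (2 * sig * noise_coeff i v w * (v $ i + drift v w $ i)))
     + (\<Sum>i\<in>UNIV. (x $ i)\<^sup>2 * (sig\<^sup>2 * (noise_coeff i v w)\<^sup>2))"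
    by (simp add: sum.distrib sum_distrib_left inner_vec_def power2_norm_vec)
  finally show ?thesis .
qed

definition dissipation :: "real^'n \<Rightarrow> real^'n \<Rightarrow> real^'n \<Rightarrow> real" where
  "dissipation c v w = (v - c) \<bullet> drift v w +
     (lam\<^sup>2 + sig\<^sup>2 * kappa nt TYPE('n)) / 2 * (gamma_w \<beta> E v w)\<^sup>2 * (norm (w - v))\<^sup>2"

lemma quadratic_kernel_dissipation: "quadratic_kernel (dissipation c)"
  unfolding dissipation_def[abs_def]
  by (intro dominated_kernel_add quadratic_kernel_inner dominated_kernel_diff linear_kernel_fst
      linear_kernel_const linear_kernel_drift bounded_kernel_mult bounded_kernel_const
      bounded_kernel_power2 bounded_kernel_gamma_w quadratic_kernel_norm_sq linear_kernel_diff)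

lemma dissipation_symmetrized_le:
  assumes "bdd_above (range E)" and "bdd_below (range E)" and "0 \<le> \<beta>" and "0 \<le> lam"
  shows "dissipation c v w + dissipation c w v
    \<le> ((lam\<^sup>2 + sig\<^sup>2 * kappa nt TYPE('n)) / 2 - lam / (1 + C_beta \<beta> E))
        * ((norm (v - c))\<^sup>2 + (norm (w - c))\<^sup>2)
      + (lam - (lam\<^sup>2 + sig\<^sup>2 * kappa nt TYPE('n))) * ((v - c) \<bullet> (w - c))"
proof -
  define \<mu> where "\<mu> = (lam\<^sup>2 + sig\<^sup>2 * kappa nt TYPE('n)) / 2"
  define A B X where "A = (norm (v - c))\<^sup>2" and "B = (norm (w - c))\<^sup>2" and "X = (v - c) \<bullet> (w - c)"
  have N: "(norm (w - v))\<^sup>2 = A + B - 2 * X" and N': "(norm (v - w))\<^sup>2 = A + B - 2 * X"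
    using dot_norm_neg[of "v - c" "w - c"] by (simp_all add: A_def B_def X_def norm_minus_commute)
  have "(v - c) \<bullet> (w - v) = (v - c) \<bullet> ((w - c) - (v - c))"
    and "(w - c) \<bullet> (v - w) = (w - c) \<bullet> ((v - c) - (w - c))"
    by simp_all
  then have "(v - c) \<bullet> (w - v) = X - A" and "(w - c) \<bullet> (v - w) = X - B"
    by (simp_all only: inner_diff_right A_def B_def X_def power2_norm_eq_inner inner_commute)
  then have "dissipation c v w + dissipation c w v
      = (lam * gamma_w \<beta> E v w * (X - A) + \<mu> * (gamma_w \<beta> E v w)\<^sup>2 * (A + B - 2 * X))
        + (lam * (1 - gamma_w \<beta> E v w) * (X - B) + \<mu> * (1 - gamma_w \<beta> E v w)\<^sup>2 * (A + B - 2 * X))"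
    by (simp only: dissipation_def drift_def inner_scaleR_right N N' \<mu>_def[symmetric]
        gamma_w_swap[where v = v and w = w])
  also have "\<dots> \<le> (\<mu> - lam * (1 / (1 + C_beta \<beta> E))) * (A + B) + (lam - 2 * \<mu>) * X"
  proof (rule symmetrized_dissipation_le)
    show "0 \<le> A + B - 2 * X"
      unfolding N[symmetric] by simp
    show "1 / (1 + C_beta \<beta> E) \<le> gamma_w \<beta> E v w" "1 / (1 + C_beta \<beta> E) \<le> 1 - gamma_w \<beta> E v w"
      using gamma_w_ge[OF assms(1-3), of v w] gamma_w_ge[OF assms(1-3), of w v]
      by (simp_all add: gamma_w_swap[where v = v and w = w])
    show "0 \<le> \<mu>"
      using kappa_pos[of nt, where 'n = 'n] by (simp add: \<mu>_def)
  qed (simp_all add: A_def B_def gamma_w_nonneg gamma_w_le_one assms(4))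
  moreover have "lam\<^sup>2 + sig\<^sup>2 * kappa nt TYPE('n) = 2 * \<mu>"
    by (simp add: \<mu>_def)
  ultimately show ?thesis
    by (simp add: A_def B_def X_def \<mu>_def[symmetric])
qed

end

locale interaction_density = binary_interaction nt \<beta> lam sig E + finite_variance_density g
  for nt \<beta> lam sig and E g :: "real^'n \<Rightarrow> real"
begin

lemma expected_pair_integral_coordinate_gain:
  assumes "iid_noise P Xi"
  shows "(\<integral>\<omega>. pair_integral (\<lambda>v w. v_post nt \<beta> lam sig E v w (Xi \<omega>) $ i - v $ i) \<partial>P)
    = pair_integral (\<lambda>v w. drift v w $ i)"
proof -
  have kernels: "quadratic_kernel (\<lambda>v w. drift v w $ i)"
    "quadratic_kernel (\<lambda>v w. c * noise_coeff i v w)" for c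
    by (intro linear_kernel_imp_quadratic dominated_kernel_cmult dominated_kernel_component
        linear_kernel_drift linear_kernel_noise_coeff)+
  have "pair_integral (\<lambda>v w. v_post nt \<beta> lam sig E v w (Xi \<omega>) $ i - v $ i)
      = pair_integral (\<lambda>v w. drift v w $ i) + sig * pair_integral (noise_coeff i) * Xi \<omega> $ i" for \<omega>
  proof -
    have "(\<lambda>v w. v_post nt \<beta> lam sig E v w (Xi \<omega>) $ i - v $ i)
        = (\<lambda>v w. drift v w $ i + (sig * Xi \<omega> $ i) * noise_coeff i v w)"
      by (intro ext) (simp add: v_post_nth)
    then show ?thesis
      by (simp add: pair_integral_add kernels pair_integral_cmult)
  qed
  then show ?thesis
    using expectation_noise_affine[OF assms] by simp
qed

lemma pair_integral_norm_v_post_sq_diff: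
  "pair_integral (\<lambda>v w. (norm (v_post nt \<beta> lam sig E v w x))\<^sup>2 - (norm v)\<^sup>2)
    = pair_integral (\<lambda>v w. 2 * (v \<bullet> drift v w) + (norm (drift v w))\<^sup>2)
      + (\<Sum>i\<in>UNIV. pair_integral (\<lambda>v w. 2 * sig * noise_coeff i v w * (v $ i + drift v w $ i)) * x $ i)
      + (\<Sum>i\<in>UNIV. pair_integral (\<lambda>v w. sig\<^sup>2 * (noise_coeff i v w)\<^sup>2) * (x $ i)\<^sup>2)"
proof -
  have Q: "quadratic_kernel (\<lambda>v w. 2 * (v \<bullet> drift v w) + (norm (drift v w))\<^sup>2)"
    by (intro dominated_kernel_add dominated_kernel_cmult quadratic_kernel_inner linear_kernel_fst
        linear_kernel_drift quadratic_kernel_norm_sq)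
  have BS: "quadratic_kernel (\<lambda>v w. c * (2 * sig * noise_coeff i v w * (v $ i + drift v w $ i)))"
    "quadratic_kernel (\<lambda>v w. c * (sig\<^sup>2 * (noise_coeff i v w)\<^sup>2))" for c i
    by (intro dominated_kernel_cmult quadratic_kernel_mult quadratic_kernel_power2
        linear_kernel_noise_coeff dominated_kernel_add dominated_kernel_component linear_kernel_fst
        linear_kernel_drift)+
  then have sums:
    "quadratic_kernel (\<lambda>v w. \<Sum>i\<in>UNIV. c i * (2 * sig * noise_coeff i v w * (v $ i + drift v w $ i)))"
    "quadratic_kernel (\<lambda>v w. \<Sum>i\<in>UNIV. c i * (sig\<^sup>2 * (noise_coeff i v w)\<^sup>2))" for c
    by (auto intro!: dominated_kernel_sum)
  show ?thesis
    unfolding norm_v_post_sq_diff using Q BS sums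
    by (simp add: pair_integral_add dominated_kernel_add pair_integral_sum pair_integral_cmult
        mult.commute)
qed

lemma expected_pair_integral_energy_gain:
  assumes "iid_noise P Xi"
  shows "(\<integral>\<omega>. pair_integral (\<lambda>v w. (norm (v_post nt \<beta> lam sig E v w (Xi \<omega>)))\<^sup>2 - (norm v)\<^sup>2) \<partial>P)
    = pair_integral energy_gain"
proof -
  have Q: "quadratic_kernel (\<lambda>v w. 2 * (v \<bullet> drift v w) + (norm (drift v w))\<^sup>2)"
    by (intro dominated_kernel_add dominated_kernel_cmult quadratic_kernel_inner linear_kernel_fst
        linear_kernel_drift quadratic_kernel_norm_sq)
  have S: "quadratic_kernel (\<lambda>v w. sig\<^sup>2 * (noise_coeff i v w)\<^sup>2)" for i
    by (intro dominated_kernel_cmult quadratic_kernel_power2 linear_kernel_noise_coeff)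
  have "(\<integral>\<omega>. pair_integral (\<lambda>v w. (norm (v_post nt \<beta> lam sig E v w (Xi \<omega>)))\<^sup>2 - (norm v)\<^sup>2) \<partial>P)
      = pair_integral (\<lambda>v w. 2 * (v \<bullet> drift v w) + (norm (drift v w))\<^sup>2)
        + (\<Sum>i\<in>UNIV. pair_integral (\<lambda>v w. sig\<^sup>2 * (noise_coeff i v w)\<^sup>2))"
    unfolding pair_integral_norm_v_post_sq_diff by (rule expectation_noise_quadratic[OF assms])
  also have "\<dots> = pair_integral (\<lambda>v w. 2 * (v \<bullet> drift v w) + (norm (drift v w))\<^sup>2
      + (\<Sum>i\<in>UNIV. sig\<^sup>2 * (noise_coeff i v w)\<^sup>2))"
    using Q S by (simp add: pair_integral_add pair_integral_sum dominated_kernel_sum)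
  also have "(\<lambda>v w. 2 * (v \<bullet> drift v w) + (norm (drift v w))\<^sup>2
      + (\<Sum>i\<in>UNIV. sig\<^sup>2 * (noise_coeff i v w)\<^sup>2)) = energy_gain"
    by (intro ext) (simp add: energy_gain_def norm_drift_sq noise_coeff_def
        sum_diff_mat_diagonal_sq algebra_simps flip: sum_distrib_left)
  finally show ?thesis .
qed

lemma pair_integral_dissipation_eq:
  "1/2 * pair_integral energy_gain - (\<Sum>i\<in>UNIV. center $ i * pair_integral (\<lambda>v w. drift v w $ i))
    = pair_integral (dissipation center)"
proof -
  have drift_nth: "quadratic_kernel (\<lambda>v w. c * drift v w $ i)" for c i
    by (intro dominated_kernel_cmult linear_kernel_imp_quadratic dominated_kernel_component
        linear_kernel_drift)
  have center_drift: "quadratic_kernel (\<lambda>v w. center \<bullet> drift v w)"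
    by (intro quadratic_kernel_inner linear_kernel_const linear_kernel_drift)
  have "(\<Sum>i\<in>UNIV. center $ i * pair_integral (\<lambda>v w. drift v w $ i))
      = pair_integral (\<lambda>v w. center \<bullet> drift v w)"
    unfolding inner_vec_def using drift_nth by (simp add: pair_integral_sum pair_integral_cmult)
  moreover have "pair_integral (\<lambda>v w. 1/2 * energy_gain v w - center \<bullet> drift v w)
      = 1/2 * pair_integral energy_gain - pair_integral (\<lambda>v w. center \<bullet> drift v w)"
    by (simp only: pair_integral_diff[OF dominated_kernel_cmult[OF quadratic_kernel_energy_gain]
          center_drift] pair_integral_cmult)
  moreover have "(\<lambda>v w. 1/2 * energy_gain v w - center \<bullet> drift v w) = dissipation center"
    by (intro ext) (simp add: energy_gain_def dissipation_def inner_diff_left algebra_simps)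
  ultimately show ?thesis by simp
qed

lemma pair_integral_dissipation_le:
  assumes "bdd_above (range E)" and "bdd_below (range E)" and "0 \<le> \<beta>" and "0 \<le> lam"
  shows "pair_integral (dissipation center)
    \<le> (lam\<^sup>2 + 2 * sig\<^sup>2 * kappa nt TYPE('n) - lam / C_beta \<beta> E)
      * (1/2 * (\<integral>v. (norm (v - center))\<^sup>2 * g v \<partial>lborel))"
    (is "_ \<le> ?rate * (1/2 * ?S)")
proof -
  define a where "a = (lam\<^sup>2 + sig\<^sup>2 * kappa nt TYPE('n)) / 2 - lam / (1 + C_beta \<beta> E)"
  define b where "b = lam - (lam\<^sup>2 + sig\<^sup>2 * kappa nt TYPE('n))"
  have centered: "linear_kernel (\<lambda>v w. v - center)" "linear_kernel (\<lambda>v w. w - center)"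
    by (intro dominated_kernel_diff linear_kernel_fst linear_kernel_snd linear_kernel_const)+
  have A: "quadratic_kernel (\<lambda>v w. (norm (v - center))\<^sup>2)"
    and B: "quadratic_kernel (\<lambda>v w. (norm (w - center))\<^sup>2)"
    and X: "quadratic_kernel (\<lambda>v w. (v - center) \<bullet> (w - center))"
    by (intro quadratic_kernel_norm_sq quadratic_kernel_inner centered)+
  note D = quadratic_kernel_dissipation[of center]
  have "pair_integral (dissipation center) + pair_integral (\<lambda>v w. dissipation center w v)
      = pair_integral (\<lambda>v w. dissipation center v w + dissipation center w v)"
    by (rule pair_integral_add[OF D quadratic_kernel_swap[OF D], symmetric])
  also have "\<dots> \<le> pair_integral (\<lambda>v w. a * ((norm (v - center))\<^sup>2 + (norm (w - center))\<^sup>2)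
      + b * ((v - center) \<bullet> (w - center)))"
    unfolding a_def b_def
    by (intro pair_integral_mono dominated_kernel_add[OF D quadratic_kernel_swap[OF D]]
        dominated_kernel_add dominated_kernel_cmult A B X dissipation_symmetrized_le assms)
  also have "\<dots> = a * (2 * ?S)"
    using pair_integral_add[OF dominated_kernel_cmult[OF dominated_kernel_add[OF A B]]
        dominated_kernel_cmult[OF X]] pair_integral_add[OF A B] pair_integral_centered_inner
    by (simp add: pair_integral_cmult pair_integral_fst pair_integral_snd)
  finally have "pair_integral (dissipation center) \<le> a * ?S"
    using pair_integral_swap[OF D] by simp
  also have "\<dots> \<le> ?rate * (1/2 * ?S)"
  proof -
    have "2 * a = lam\<^sup>2 + sig\<^sup>2 * kappa nt TYPE('n) - 2 * lam / (1 + C_beta \<beta> E)"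
      by (simp add: a_def)
    then have "2 * a \<le> ?rate"
      using symmetrized_rate_le[OF C_beta_ge_one[OF assms(1-3)] assms(4), of "sig\<^sup>2 * kappa nt TYPE('n)"]
        kappa_pos[of nt, where 'n = 'n] by simp
    moreover have "0 \<le> ?S"
      by (intro integral_nonneg_AE AE_I2) (simp add: density_nonneg)
    ultimately have "(2 * a) * (1/2 * ?S) \<le> ?rate * (1/2 * ?S)"
      by (intro mult_right_mono) simp_all
    then show ?thesis by simp
  qed
  finally show ?thesis .
qed

lemma coll_eq_expected_pair_integral:
  assumes "\<And>v. g v = f v t"
  shows "coll nt \<beta> lam sig E P Xi f \<phi> t
    = (\<integral>\<omega>. pair_integral (\<lambda>v w. \<phi> (v_post nt \<beta> lam sig E v w (Xi \<omega>)) - \<phi> v) \<partial>P)"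
  unfolding coll_def pair_integral_def assms ..

end

section \<open>Decay of the variance\<close>

lemma boltzmann_solution_density:
  assumes "boltzmann_solution nt \<beta> lam sig E P Xi f" and "0 \<le> t"
  shows "finite_variance_density (\<lambda>v. f v t)"
  using assms unfolding boltzmann_solution_def finite_variance_density_def by auto

lemma mean_nth:
  assumes "finite_variance_density (\<lambda>v. f v t)"
  shows "mean f t $ i = (\<integral>v. v $ i * f v t \<partial>lborel)"
proof -
  interpret finite_variance_density "\<lambda>v. f v t" by fact
  show ?thesis
    using integral_bounded_linear[OF bounded_linear_vec_nth integrable_first_moment, of i]
    by (simp add: mean_def mult.commute)
qed

lemma Var_eq_moments:
  assumes "finite_variance_density (\<lambda>v. f v t)"
  shows "Var f t = 1/2 * ((\<integral>v. (norm v)\<^sup>2 * f v t \<partial>lborel) - (\<Sum>i\<in>UNIV. (\<integral>v. v $ i * f v t \<partial>lborel)\<^sup>2))"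
proof -
  interpret finite_variance_density "\<lambda>v. f v t" by fact
  have "mean f t = center"
    unfolding mean_def center_def ..
  then show ?thesis
    using integral_centered_second_moment mean_nth[of f t, OF assms]
    by (simp add: Var_def second_moment_def power2_norm_vec[of center])
qed

lemma Var_nonneg: "(\<And>v. 0 \<le> f v t) \<Longrightarrow> 0 \<le> Var f t"
  unfolding Var_def by (simp add: integral_nonneg_AE)

lemma has_real_derivative_half_variance:
  fixes m :: "'i::finite \<Rightarrow> real \<Rightarrow> real"
  assumes "(M has_real_derivative dM) (at s within S)"
    and "\<And>i. (m i has_real_derivative dm i) (at s within S)"
  shows "((\<lambda>s. 1/2 * (M s - (\<Sum>i\<in>UNIV. (m i s)\<^sup>2))) has_real_derivative
      1/2 * dM - (\<Sum>i\<in>UNIV. m i s * dm i)) (at s within S)"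
proof -
  have "((\<lambda>s. (m i s)\<^sup>2) has_real_derivative 2 * (dm i * m i s)) (at s within S)" for i
    using DERIV_power[OF assms(2)[of i], of 2] by simp
  then have "((\<lambda>s. 1/2 * (M s - (\<Sum>i\<in>UNIV. (m i s)\<^sup>2))) has_real_derivative
      1/2 * (dM - (\<Sum>i\<in>UNIV. 2 * (dm i * m i s)))) (at s within S)"
    by (intro DERIV_cmult DERIV_diff DERIV_sum assms(1))
  then show ?thesis
    by (rule DERIV_cong) (simp add: sum_distrib_left algebra_simps)
qed

lemma exp_bound_of_derivative_bound:
  fixes V D :: "real \<Rightarrow> real"
  assumes deriv: "\<And>s. 0 \<le> s \<Longrightarrow> (V has_real_derivative D s) (at s within {0..})"
    and bound: "\<And>s. 0 \<le> s \<Longrightarrow> D s \<le> - r * V s" and "0 \<le> t"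
  shows "V t \<le> V 0 * exp (- r * t)"
proof -
  define W where "W s = V s * exp (r * s)" for s
  have W': "(W has_real_derivative D s * exp (r * s) + V s * (r * exp (r * s))) (at s within {0..})"
    if "0 \<le> s" for s
    unfolding W_def[abs_def] by (rule derivative_eq_intros deriv[OF that] refl | simp)+
  have "W t \<le> W 0"
  proof (rule DERIV_nonpos_imp_decreasing_open[OF \<open>0 \<le> t\<close>])
    fix s assume s: "0 < s" "s < t"
    have "(W has_real_derivative D s * exp (r * s) + V s * (r * exp (r * s))) (at s within {0<..})"
      by (rule DERIV_subset[OF W']) (use s in auto)
    then have "(W has_real_derivative D s * exp (r * s) + V s * (r * exp (r * s))) (at s)"
      using at_within_open[of s "{0<..}"] s by simp
    moreover have "D s * exp (r * s) + V s * (r * exp (r * s)) = (D s + r * V s) * exp (r * s)"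
      by (simp add: algebra_simps)
    moreover have "(D s + r * V s) * exp (r * s) \<le> 0"
      using bound[of s] s by (simp add: mult_nonpos_nonneg)
    ultimately show "\<exists>y. (W has_real_derivative y) (at s) \<and> y \<le> 0" by auto
  next
    show "continuous_on {0..t} W"
      unfolding continuous_on_eq_continuous_within
    proof
      fix s assume "s \<in> {0..t}"
      then have "continuous (at s within {0..}) W"
        by (intro DERIV_continuous[OF W']) simp
      then show "continuous (at s within {0..t}) W"
        by (rule continuous_within_subset) auto
    qed
  qed
  then have "V t * exp (r * t) \<le> V 0"
    unfolding W_def by simp
  from mult_right_mono[OF this, of "exp (- r * t)"] show ?thesis
    by (simp add: mult.assoc flip: exp_add)
qed

lemma tendsto_zero_of_exp_bound:
  fixes V :: "real \<Rightarrow> real"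
  assumes "0 < r" and "\<forall>\<^sub>F t in at_top. 0 \<le> V t \<and> V t \<le> c * exp (- r * t)"
  shows "(V \<longlongrightarrow> 0) at_top"
proof (rule tendsto_sandwich[of "\<lambda>_. 0" _ _ "\<lambda>t. c * exp (- r * t)"])
  have "filterlim (\<lambda>t. r * t) at_top at_top"
    using \<open>0 < r\<close> by (intro filterlim_tendsto_pos_mult_at_top[OF tendsto_const] filterlim_ident)
  then have "filterlim (\<lambda>t. - (r * t)) at_bot at_top"
    by (simp add: filterlim_uminus_at_bot)
  then have "((\<lambda>t. exp (- r * t)) \<longlongrightarrow> 0) at_top"
    using filterlim_compose[OF exp_at_bot] by simp
  then show "((\<lambda>t. c * exp (- r * t)) \<longlongrightarrow> 0) at_top"
    using tendsto_mult_right_zero by blast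
qed (use assms(2) in \<open>auto elim: eventually_mono\<close>)

lemma (in binary_interaction) Var_exponential_decay:
  assumes "bdd_above (range E)" and "bdd_below (range E)" and "0 \<le> \<beta>" and "0 \<le> lam"
    and noise: "iid_noise P Xi" and sol: "boltzmann_solution nt \<beta> lam sig E P Xi f" and "0 \<le> t"
  shows "Var f t \<le> Var f 0 * exp (- (lam / C_beta \<beta> E - lam\<^sup>2 - 2 * sig\<^sup>2 * kappa nt TYPE('n)) * t)"
proof -
  define M where "M s = (\<integral>v. (norm v)\<^sup>2 * f v s \<partial>lborel)" for s
  define m where "m i s = (\<integral>v. v $ i * f v s \<partial>lborel)" for i s
  define V where "V s = 1/2 * (M s - (\<Sum>i\<in>UNIV. (m i s)\<^sup>2))" for s
  define D where "D s = 1/2 * coll nt \<beta> lam sig E P Xi f (\<lambda>v. (norm v)\<^sup>2) s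
      - (\<Sum>i\<in>UNIV. m i s * coll nt \<beta> lam sig E P Xi f (\<lambda>v. v $ i) s)" for s
  have Var_eq: "Var f s = V s" if "0 \<le> s" for s
    using Var_eq_moments[of f s, OF boltzmann_solution_density[OF sol that]] by (simp add: V_def M_def m_def)
  have "(V has_real_derivative D s) (at s within {0..})" if "0 \<le> s" for s
    unfolding V_def[abs_def] D_def using sol that
    by (intro has_real_derivative_half_variance) (auto simp: boltzmann_solution_def M_def[abs_def]
        m_def[abs_def])
  moreover have "D s \<le> - (lam / C_beta \<beta> E - lam\<^sup>2 - 2 * sig\<^sup>2 * kappa nt TYPE('n)) * V s"
    if "0 \<le> s" for s
  proof -
    interpret interaction_density nt \<beta> lam sig E "\<lambda>v. f v s"
      using binary_interaction_axioms boltzmann_solution_density[OF sol that]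
      by (rule interaction_density.intro)
    have "m i s = center $ i" for i
      using mean_nth[of f s, OF finite_variance_density_axioms] by (simp add: m_def mean_def center_def)
    then have "D s = 1/2 * pair_integral energy_gain
        - (\<Sum>i\<in>UNIV. center $ i * pair_integral (\<lambda>v w. drift v w $ i))"
      by (simp add: D_def coll_eq_expected_pair_integral expected_pair_integral_coordinate_gain[OF noise]
          expected_pair_integral_energy_gain[OF noise])
    also have "\<dots> \<le> (lam\<^sup>2 + 2 * sig\<^sup>2 * kappa nt TYPE('n) - lam / C_beta \<beta> E)
        * (1/2 * (\<integral>v. (norm (v - center))\<^sup>2 * f v s \<partial>lborel))"
      unfolding pair_integral_dissipation_eq by (rule pair_integral_dissipation_le[OF assms(1-4)])
    also have "1/2 * (\<integral>v. (norm (v - center))\<^sup>2 * f v s \<partial>lborel) = V s"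
      using Var_eq[OF that] by (simp add: Var_def mean_def center_def)
    finally show ?thesis by (simp add: algebra_simps)
  qed
  ultimately have "V t \<le> V 0 * exp (- (lam / C_beta \<beta> E - lam\<^sup>2 - 2 * sig\<^sup>2 * kappa nt TYPE('n)) * t)"
    using \<open>0 \<le> t\<close> by (rule exp_bound_of_derivative_bound) simp_all
  then show ?thesis
    using Var_eq[of t] Var_eq[of 0] \<open>0 \<le> t\<close> by simp
qed

theorem proposition1:
  fixes E :: "real^'n \<Rightarrow> real"
    and lam sig :: real
    and nt :: noise
    and P :: "'w measure"
    and Xi :: "'w \<Rightarrow> real^'n"
  assumes "continuous_on UNIV E"
    and "\<forall>v. 0 < E v"
    and "bdd_above (range E)"
    and "bdd_below (range E)"
    and "0 \<le> lam"
    and "0 \<le> sig"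
    and "iid_noise P Xi"
  shows "\<exists>\<beta>0. \<forall>\<beta>. \<beta> > 0 \<and> \<beta> \<ge> \<beta>0 \<longrightarrow>
           (\<forall>f :: real^'n \<Rightarrow> real \<Rightarrow> real.
              boltzmann_solution nt \<beta> lam sig E P Xi f \<longrightarrow>
              (\<forall>t>0. Var f t \<le> Var f 0 *
                 exp (- (lam / C_beta \<beta> E - lam\<^sup>2 - 2 * sig\<^sup>2 * kappa nt TYPE('n)) * t)) \<and>
              (sig\<^sup>2 < lam / (2 * kappa nt TYPE('n)) * (1 / C_beta \<beta> E - lam) \<longrightarrow>
                 (Var f \<longlongrightarrow> 0) at_top))"
proof (intro exI[of _ 0] allI impI)
  fix \<beta> :: real and f :: "real^'n \<Rightarrow> real \<Rightarrow> real"
  assume "0 < \<beta> \<and> 0 \<le> \<beta>" and sol: "boltzmann_solution nt \<beta> lam sig E P Xi f"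
  interpret binary_interaction nt \<beta> lam sig E
    using assms(1) by unfold_locales
  define r where "r = lam / C_beta \<beta> E - lam\<^sup>2 - 2 * sig\<^sup>2 * kappa nt TYPE('n)"
  have decay: "Var f t \<le> Var f 0 * exp (- r * t)" if "0 \<le> t" for t
    unfolding r_def using \<open>0 < \<beta> \<and> 0 \<le> \<beta>\<close>
    by (intro Var_exponential_decay[OF assms(3,4) _ assms(5,7) sol that]) simp
  show "(\<forall>t>0. Var f t \<le> Var f 0 * exp (- r * t)) \<and>
      (sig\<^sup>2 < lam / (2 * kappa nt TYPE('n)) * (1 / C_beta \<beta> E - lam) \<longrightarrow> (Var f \<longlongrightarrow> 0) at_top)"
  proof (intro conjI allI impI)
    assume "sig\<^sup>2 < lam / (2 * kappa nt TYPE('n)) * (1 / C_beta \<beta> E - lam)"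
    then have "0 < r"
      using kappa_pos[of nt, where 'n = 'n] by (simp add: r_def field_simps power2_eq_square)
    moreover have "0 \<le> Var f t" if "0 \<le> t" for t
      using sol that by (intro Var_nonneg) (simp add: boltzmann_solution_def)
    ultimately show "(Var f \<longlongrightarrow> 0) at_top"
      using decay by (intro tendsto_zero_of_exp_bound[of r]) (auto intro: eventually_at_top_linorderI[of 0])
  qed (intro decay, simp)
qed

end
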